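(* Let $F\in\{\mathbb{R},\mathbb{C}\}$, let $V$ be a vector space over $F$, $I$ an index set, $(W_i)_{i\in I}$ subspaces with direct sum $W=\bigoplus_{i}W_i$, $\mathcal{B}_i$ an $F$-basis of $W_i$, $\mathcal{B}=\bigsqcup_i\mathcal{B}_i$, and $\theta_i:W_i\to F^{(\mathcal{B}_i)}$ the coordinate isomorphism. Let $\varphi,\lambda$ be multiplicative automorphisms of $F$ that commute with complex conjugation and are order preserving on $[0,\infty)$, and let $\rho_b$ ($b\in\mathcal{B}$) be multiplicative automorphisms of $F$. For each $i$, let $\langle-,-\rangle_i$ be an inner product on the vector space $F^{(\mathcal{B}_i)}$ (with its usual operations) over the $F$-like line $(F,+_{\lambda\circ\varphi^{-1}},\cdot)$. Define $\widetilde{\boldsymbol\sigma}_i:W_i\to F^{(\mathcal{B}_i)}$ by $\widetilde{\boldsymbol\sigma}_i(u)=\big(\varphi(\rho_b^{-1}(\theta_i(u)_b))\big)_{b\in\mathcal{B}_i}$, and let $W^{\boldsymbol\eta}$ be $W$ with operations $u\oplus v=\boldsymbol\theta^{-1}(\boldsymbol\theta(u)+_{\boldsymbol\sigma}\boldsymbol\theta(v))$, $\alpha\odot u=\boldsymbol\theta^{-1}(\alpha\cdot_{\boldsymbol\rho}\boldsymbol\theta(u))$, where $\boldsymbol\theta:W\to F^{(\mathcal{B})}$ collects all coordinates, $(x+_{\boldsymbol\sigma}y)_b=(\varphi\rho_b^{-1})^{-1}\big(\varphi\rho_b^{-1}(x_b)+\varphi\rho_b^{-1}(y_b)\big)$ and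 $(\alpha\cdot_{\boldsymbol\rho}x)_b=\rho_b(\alpha)x_b$. For $u=\sum_iu_i$, $v=\sum_iv_i$ with $u_i,v_i\in W_i$, set $$\langle u,v\rangle_{\mathcal I}={}^{\lambda}\!\sum_{i\in I}\varphi^{-1}\big(\langle\widetilde{\boldsymbol\sigma}_i(u_i),\widetilde{\boldsymbol\sigma}_i(v_i)\rangle_i\big),$$ where ${}^{\lambda}\!\sum$ denotes iterated $+_\lambda$ (only finitely many terms are nonzero). Then $\langle-,-\rangle_{\mathcal I}$ is an inner product on $W^{\boldsymbol\eta}$ (a strongly regular near-vector space over $(F,\cdot)$) over the $F$-like line $(F,+_\lambda,\cdot)$.
   Context: A multiplicative automorphism of $F$ is a bijection $\kappa$ with $\kappa(1)=1$, $\kappa(\alpha\beta)=\kappa(\alpha)\kappa(\beta)$; $\alpha+_\kappa\beta:=\kappa^{-1}(\kappa(\alpha)+\kappa(\beta))$, and $(F,+_\kappa,\cdot)$ is a field isomorphic to $F$ via $\kappa^{-1}$ (the $F$-like line). A near-vector space over $(F,\cdot)$: abelian group with free monoid action of $(F,\cdot)$ by endomorphisms ($0\mapsto 0$, $\pm1\mapsto\pm\mathrm{id}$) whose quasi-kernel $Q(V)=\{u\mid\forall\alpha,\beta\,\exists\gamma:\alpha u+\beta u=\gamma u\}$ generates $V$; strongly regular means $Q(V)=V$. An inner product on a strongly regular near-vector space $(X,+_X,\cdot_X)$ over $(F,+_\kappa,\cdot)$ is a map $\langle-,-\rangle:X\times X\to F$ such that for all $\alpha\in F$, $u,v,w\in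 X$: (I1) $\langle u,v\rangle=\kappa^{-1}\big(\overline{\kappa(\langle v,u\rangle)}\big)$; (I2) $\langle\alpha\cdot_Xu,v\rangle=\alpha\langle u,v\rangle$; (I3) $\langle u+_Xv,w\rangle=\langle u,w\rangle+_\kappa\langle v,w\rangle$; (I4) $\langle u,u\rangle\in\kappa^{-1}([0,\infty))$ for $u\neq0$; (I5) $\langle u,u\rangle=0$ iff $u=0$. The coordinate isomorphism $\theta_i$ sends $b\in\mathcal{B}_i$ to $(\delta_{b,c})_{c\in\mathcal{B}_i}$ and extends linearly; $F^{(X)}$ denotes finitely supported families. *)

theory Defs
  imports Complex_Main
begin

text \<open>The scalar field F is modelled as a subset of the complex numbers, namely
  either the reals (\<real>) or all of \<complex> (UNIV).  Complex conjugation is cnj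
  (identity on \<real>); the ray [0,\<infinity>) is the set nonneg_ray.\<close>

definition nonneg_ray :: "complex set" where
  "nonneg_ray = {z. z \<in> \<real> \<and> 0 \<le> Re z}"

definition mult_aut :: "complex set \<Rightarrow> (complex \<Rightarrow> complex) \<Rightarrow> bool" where
  "mult_aut F \<kappa> \<longleftrightarrow> bij_betw \<kappa> F F \<and> \<kappa> 1 = 1 \<and>
     (\<forall>a\<in>F. \<forall>b\<in>F. \<kappa> (a * b) = \<kappa> a * \<kappa> b)"

definition commutes_cnj :: "complex set \<Rightarrow> (complex \<Rightarrow> complex) \<Rightarrow> bool" where
  "commutes_cnj F \<kappa> \<longleftrightarrow> (\<forall>x\<in>F. \<kappa> (cnj x) = cnj (\<kappa> x))"

definition order_pres_nonneg :: "(complex \<Rightarrow> complex) \<Rightarrow> bool" where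
  "order_pres_nonneg \<kappa> \<longleftrightarrow>
     (\<forall>x\<in>nonneg_ray. \<forall>y\<in>nonneg_ray. Re x \<le> Re y \<longrightarrow> Re (\<kappa> x) \<le> Re (\<kappa> y))"

text \<open>Inner product (I1)-(I5) on a structure X (carrier X, addition addX, scalar action
  smulX, zero zX) over the F-like line (F, +_\<kappa>, \<cdot>).\<close>

definition is_inner_product ::
  "complex set \<Rightarrow> (complex \<Rightarrow> complex) \<Rightarrow> 'x set \<Rightarrow> ('x \<Rightarrow> 'x \<Rightarrow> 'x) \<Rightarrow>
   (complex \<Rightarrow> 'x \<Rightarrow> 'x) \<Rightarrow> 'x \<Rightarrow> ('x \<Rightarrow> 'x \<Rightarrow> complex) \<Rightarrow> bool" where
  "is_inner_product F \<kappa> X addX smulX zX ip \<longleftrightarrow>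
     (\<forall>u\<in>X. \<forall>v\<in>X. ip u v \<in> F) \<and>
     (\<forall>u\<in>X. \<forall>v\<in>X. ip u v = inv_into F \<kappa> (cnj (\<kappa> (ip v u)))) \<and>
     (\<forall>\<alpha>\<in>F. \<forall>u\<in>X. \<forall>v\<in>X. ip (smulX \<alpha> u) v = \<alpha> * ip u v) \<and>
     (\<forall>u\<in>X. \<forall>v\<in>X. \<forall>w\<in>X.
        ip (addX u v) w = inv_into F \<kappa> (\<kappa> (ip u w) + \<kappa> (ip v w))) \<and>
     (\<forall>u\<in>X. u \<noteq> zX \<longrightarrow> ip u u \<in> {x\<in>F. \<kappa> x \<in> nonneg_ray}) \<and>
     (\<forall>u\<in>X. ip u u = 0 \<longleftrightarrow> u = zX)"

text \<open>Vector spaces over F: an abelian group with a scalar multiplication by complex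
  numbers whose axioms are only required for scalars in F.\<close>

definition f_vector_space :: "complex set \<Rightarrow> (complex \<Rightarrow> 'v::ab_group_add \<Rightarrow> 'v) \<Rightarrow> bool" where
  "f_vector_space F sc \<longleftrightarrow>
     (\<forall>a\<in>F. \<forall>x y. sc a (x + y) = sc a x + sc a y) \<and>
     (\<forall>a\<in>F. \<forall>b\<in>F. \<forall>x. sc (a + b) x = sc a x + sc b x) \<and>
     (\<forall>a\<in>F. \<forall>b\<in>F. \<forall>x. sc a (sc b x) = sc (a * b) x) \<and>
     (\<forall>x. sc 1 x = x)"

definition f_subspace :: "complex set \<Rightarrow> (complex \<Rightarrow> 'v::ab_group_add \<Rightarrow> 'v) \<Rightarrow> 'v set \<Rightarrow> bool" where
  "f_subspace F sc S \<longleftrightarrow> 0 \<in> S \<and> (\<forall>x\<in>S. \<forall>y\<in>S. x + y \<in> S) \<and> (\<forall>a\<in>F. \<forall>x\<in>S. sc a x \<in> S)"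

definition f_span :: "complex set \<Rightarrow> (complex \<Rightarrow> 'v::ab_group_add \<Rightarrow> 'v) \<Rightarrow> 'v set \<Rightarrow> 'v set" where
  "f_span F sc S = {\<Sum>x\<in>T. sc (c x) x | T c. finite T \<and> T \<subseteq> S \<and> (\<forall>x\<in>T. c x \<in> F)}"

definition f_independent :: "complex set \<Rightarrow> (complex \<Rightarrow> 'v::ab_group_add \<Rightarrow> 'v) \<Rightarrow> 'v set \<Rightarrow> bool" where
  "f_independent F sc S \<longleftrightarrow>
     (\<forall>T c. finite T \<longrightarrow> T \<subseteq> S \<longrightarrow> (\<forall>x\<in>T. c x \<in> F) \<longrightarrow>
        (\<Sum>x\<in>T. sc (c x) x) = 0 \<longrightarrow> (\<forall>x\<in>T. c x = 0))"

definition f_basis :: "complex set \<Rightarrow> (complex \<Rightarrow> 'v::ab_group_add \<Rightarrow> 'v) \<Rightarrow> 'v set \<Rightarrow> 'v set \<Rightarrow> bool" where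
  "f_basis F sc Wi Bi \<longleftrightarrow> Bi \<subseteq> Wi \<and> f_independent F sc Bi \<and> f_span F sc Bi = Wi"

definition independent_family :: "'i set \<Rightarrow> ('i \<Rightarrow> 'v::ab_group_add set) \<Rightarrow> bool" where
  "independent_family I W \<longleftrightarrow>
     (\<forall>J w. finite J \<longrightarrow> J \<subseteq> I \<longrightarrow> (\<forall>i\<in>J. w i \<in> W i) \<longrightarrow> sum w J = 0 \<longrightarrow> (\<forall>i\<in>J. w i = 0))"

definition sum_of_family :: "'i set \<Rightarrow> ('i \<Rightarrow> 'v::ab_group_add set) \<Rightarrow> 'v set" where
  "sum_of_family I W = {sum w J | J w. finite J \<and> J \<subseteq> I \<and> (\<forall>i\<in>J. w i \<in> W i)}"

definition component :: "'i set \<Rightarrow> ('i \<Rightarrow> 'v::ab_group_add set) \<Rightarrow> 'v \<Rightarrow> 'i \<Rightarrow> 'v" where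
  "component I W u = (THE w. (\<forall>i\<in>I. w i \<in> W i) \<and> (\<forall>i. i \<notin> I \<longrightarrow> w i = 0) \<and>
      finite {i\<in>I. w i \<noteq> 0} \<and> u = (\<Sum>i\<in>{i\<in>I. w i \<noteq> 0}. w i))"

text \<open>Finitely supported families F^(S), represented as functions vanishing outside S.\<close>

definition fin_fam :: "complex set \<Rightarrow> 'b set \<Rightarrow> ('b \<Rightarrow> complex) set" where
  "fin_fam F S = {c. (\<forall>b. c b \<in> F) \<and> (\<forall>b. b \<notin> S \<longrightarrow> c b = 0) \<and> finite {b. c b \<noteq> 0}}"

definition fam_add :: "('b \<Rightarrow> complex) \<Rightarrow> ('b \<Rightarrow> complex) \<Rightarrow> ('b \<Rightarrow> complex)" where
  "fam_add x y = (\<lambda>b. x b + y b)"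

definition fam_smul :: "complex \<Rightarrow> ('b \<Rightarrow> complex) \<Rightarrow> ('b \<Rightarrow> complex)" where
  "fam_smul a x = (\<lambda>b. a * x b)"

definition coords_inv :: "(complex \<Rightarrow> 'v::ab_group_add \<Rightarrow> 'v) \<Rightarrow> ('v \<Rightarrow> complex) \<Rightarrow> 'v" where
  "coords_inv sc c = (\<Sum>b\<in>{b. c b \<noteq> 0}. sc (c b) b)"

definition coords :: "complex set \<Rightarrow> (complex \<Rightarrow> 'v::ab_group_add \<Rightarrow> 'v) \<Rightarrow> 'v set \<Rightarrow> 'v \<Rightarrow> ('v \<Rightarrow> complex)" where
  "coords F sc S u = (THE c. c \<in> fin_fam F S \<and> u = coords_inv sc c)"

definition eta_add ::
  "complex set \<Rightarrow> (complex \<Rightarrow> 'v::ab_group_add \<Rightarrow> 'v) \<Rightarrow> 'v set \<Rightarrow> (complex \<Rightarrow> complex) \<Rightarrow>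
   ('v \<Rightarrow> complex \<Rightarrow> complex) \<Rightarrow> 'v \<Rightarrow> 'v \<Rightarrow> 'v" where
  "eta_add F sc BB \<phi> \<rho> u v = coords_inv sc (\<lambda>b. if b \<in> BB then
      \<rho> b (inv_into F \<phi> (\<phi> (inv_into F (\<rho> b) (coords F sc BB u b))
                        + \<phi> (inv_into F (\<rho> b) (coords F sc BB v b))))
      else 0)"

definition eta_smul ::
  "complex set \<Rightarrow> (complex \<Rightarrow> 'v::ab_group_add \<Rightarrow> 'v) \<Rightarrow> 'v set \<Rightarrow>
   ('v \<Rightarrow> complex \<Rightarrow> complex) \<Rightarrow> complex \<Rightarrow> 'v \<Rightarrow> 'v" where
  "eta_smul F sc BB \<rho> a u = coords_inv sc (\<lambda>b. if b \<in> BB then \<rho> b a * coords F sc BB u b else 0)"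

definition sigma_tilde ::
  "complex set \<Rightarrow> (complex \<Rightarrow> 'v::ab_group_add \<Rightarrow> 'v) \<Rightarrow> 'v set \<Rightarrow> (complex \<Rightarrow> complex) \<Rightarrow>
   ('v \<Rightarrow> complex \<Rightarrow> complex) \<Rightarrow> 'v \<Rightarrow> ('v \<Rightarrow> complex)" where
  "sigma_tilde F sc Bi \<phi> \<rho> u =
     (\<lambda>b. if b \<in> Bi then \<phi> (inv_into F (\<rho> b) (coords F sc Bi u b)) else 0)"

definition lambda_sum :: "complex set \<Rightarrow> (complex \<Rightarrow> complex) \<Rightarrow> 'i set \<Rightarrow> ('i \<Rightarrow> complex) \<Rightarrow> complex" where
  "lambda_sum F lam I t = inv_into F lam (\<Sum>i\<in>{i\<in>I. t i \<noteq> 0}. lam (t i))"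

definition ip_I ::
  "complex set \<Rightarrow> (complex \<Rightarrow> 'v::ab_group_add \<Rightarrow> 'v) \<Rightarrow> 'i set \<Rightarrow> ('i \<Rightarrow> 'v set) \<Rightarrow> ('i \<Rightarrow> 'v set) \<Rightarrow>
   (complex \<Rightarrow> complex) \<Rightarrow> (complex \<Rightarrow> complex) \<Rightarrow> ('v \<Rightarrow> complex \<Rightarrow> complex) \<Rightarrow>
   ('i \<Rightarrow> ('v \<Rightarrow> complex) \<Rightarrow> ('v \<Rightarrow> complex) \<Rightarrow> complex) \<Rightarrow> 'v \<Rightarrow> 'v \<Rightarrow> complex" where
  "ip_I F sc I W B \<phi> lam \<rho> ip u v = lambda_sum F lam I (\<lambda>i.
      inv_into F \<phi> (ip i (sigma_tilde F sc (B i) \<phi> \<rho> (component I W u i))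
                          (sigma_tilde F sc (B i) \<phi> \<rho> (component I W v i))))"

end

theory Submission
  imports Defs
begin

text \<open>
  Coordinates with respect to the union of the bases identify the direct sum W with the
  finitely supported families on that union.  In these coordinates the operations of W^eta
  become, after applying the twist \<phi> \<circ> \<rho>_b^-1 to the b-th coordinate, ordinary addition
  and multiplication by \<phi> \<alpha>.  So u \<mapsto> \<sigma>_i(u_i) is additive and \<phi>-semilinear, and with
  \<kappa> = \<lambda> \<circ> \<phi>^-1 each (u, v) \<mapsto> \<kappa> \<langle>\<sigma>_i(u_i), \<sigma>_i(v_i)\<rangle>_i is an ordinary Hermitian
  form, with values in [0, \<infinity>) on the diagonal, on which \<alpha> acts through \<lambda> \<alpha>.  Applying \<lambda>
  turns the iterated +_\<lambda> defining \<langle>u, v\<rangle>_I into the finite sum of these forms, which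
  inherits the axioms; definiteness holds because a finite sum in [0, \<infinity>) vanishes only if
  every term does.
\<close>

section \<open>Multiplicative automorphisms of the scalars\<close>

lemma mult_aut_in: "mult_aut F \<kappa> \<Longrightarrow> x \<in> F \<Longrightarrow> \<kappa> x \<in> F"
  unfolding mult_aut_def by (meson bij_betw_apply)

lemma mult_aut_inv_in: "mult_aut F \<kappa> \<Longrightarrow> x \<in> F \<Longrightarrow> inv_into F \<kappa> x \<in> F"
  unfolding mult_aut_def by (meson bij_betw_apply bij_betw_inv_into)

lemma mult_aut_inv_left: "mult_aut F \<kappa> \<Longrightarrow> x \<in> F \<Longrightarrow> inv_into F \<kappa> (\<kappa> x) = x"
  unfolding mult_aut_def by (meson bij_betw_inv_into_left)

lemma mult_aut_inv_right: "mult_aut F \<kappa> \<Longrightarrow> x \<in> F \<Longrightarrow> \<kappa> (inv_into F \<kappa> x) = x"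
  unfolding mult_aut_def by (meson bij_betw_inv_into_right)

lemma mult_aut_eq_iff: "mult_aut F \<kappa> \<Longrightarrow> x \<in> F \<Longrightarrow> y \<in> F \<Longrightarrow> \<kappa> x = \<kappa> y \<longleftrightarrow> x = y"
  by (metis mult_aut_inv_left)

lemma mult_aut_eq_inv_iff:
  "mult_aut F \<kappa> \<Longrightarrow> x \<in> F \<Longrightarrow> y \<in> F \<Longrightarrow> x = inv_into F \<kappa> y \<longleftrightarrow> \<kappa> x = y"
  by (metis mult_aut_inv_left mult_aut_inv_right)

lemma mult_aut_mult: "mult_aut F \<kappa> \<Longrightarrow> x \<in> F \<Longrightarrow> y \<in> F \<Longrightarrow> \<kappa> (x * y) = \<kappa> x * \<kappa> y"
  unfolding mult_aut_def by blast

lemma mult_aut_comp: "mult_aut F \<kappa> \<Longrightarrow> mult_aut F \<mu> \<Longrightarrow> mult_aut F (\<kappa> \<circ> \<mu>)"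
  unfolding mult_aut_def by (auto intro: bij_betw_trans) (metis bij_betw_apply)

locale scalar_field =
  fixes F :: "complex set"
  assumes real_or_complex: "F = \<real> \<or> F = UNIV"
begin

lemma scalars_closed [simp]:
  "0 \<in> F" "1 \<in> F"
  "x \<in> F \<Longrightarrow> y \<in> F \<Longrightarrow> x + y \<in> F"
  "x \<in> F \<Longrightarrow> y \<in> F \<Longrightarrow> x * y \<in> F"
  "x \<in> F \<Longrightarrow> y \<in> F \<Longrightarrow> x - y \<in> F"
  "x \<in> F \<Longrightarrow> - x \<in> F"
  "x \<in> F \<Longrightarrow> cnj x \<in> F"
  using real_or_complex by (auto simp: Reals_cnj_iff)

lemma scalars_sum: "(\<And>i. i \<in> K \<Longrightarrow> f i \<in> F) \<Longrightarrow> sum f K \<in> F"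
  by (induction K rule: infinite_finite_induct) auto

lemma mult_aut_zero:
  assumes "mult_aut F \<kappa>" shows "\<kappa> 0 = 0"
proof -
  have "\<kappa> 0 = \<kappa> 0 * \<kappa> 0"
    using mult_aut_mult[OF assms, of 0 0] by simp
  moreover have "\<kappa> 0 \<noteq> 1"
    using mult_aut_eq_iff[OF assms, of 0 1] assms by (simp add: mult_aut_def)
  ultimately show ?thesis
    by (metis mult_cancel_left1)
qed

lemma mult_aut_eq_0_iff: "mult_aut F \<kappa> \<Longrightarrow> x \<in> F \<Longrightarrow> \<kappa> x = 0 \<longleftrightarrow> x = 0"
  using mult_aut_eq_iff[of F \<kappa> x 0] mult_aut_zero[of \<kappa>] by simp

lemma mult_aut_inv_into:
  assumes \<kappa>: "mult_aut F \<kappa>" shows "mult_aut F (inv_into F \<kappa>)"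
  unfolding mult_aut_def
proof (intro conjI ballI)
  show "bij_betw (inv_into F \<kappa>) F F"
    using \<kappa> by (simp add: mult_aut_def bij_betw_inv_into)
  show "inv_into F \<kappa> 1 = 1"
    using mult_aut_inv_left[OF \<kappa>, of 1] \<kappa> by (simp add: mult_aut_def)
  fix x y assume "x \<in> F" "y \<in> F"
  then show "inv_into F \<kappa> (x * y) = inv_into F \<kappa> x * inv_into F \<kappa> y"
    using mult_aut_inv_left[OF \<kappa>] mult_aut_inv_right[OF \<kappa>] mult_aut_inv_in[OF \<kappa>]
      mult_aut_mult[OF \<kappa>] by (metis scalars_closed(4))
qed

end

section \<open>Finitely supported families\<close>

definition fam_restrict :: "('b \<Rightarrow> complex) \<Rightarrow> 'b set \<Rightarrow> 'b \<Rightarrow> complex" where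
  "fam_restrict c S b = (if b \<in> S then c b else 0)"

context scalar_field
begin

lemma zero_in_fin_fam: "(\<lambda>_. 0) \<in> fin_fam F S"
  by (simp add: fin_fam_def)

lemma fin_fam_add:
  assumes "c \<in> fin_fam F S" "d \<in> fin_fam F S"
  shows "fam_add c d \<in> fin_fam F S"
proof -
  have "{b. c b + d b \<noteq> 0} \<subseteq> {b. c b \<noteq> 0} \<union> {b. d b \<noteq> 0}"
    by auto
  then show ?thesis
    using assms unfolding fin_fam_def fam_add_def by (auto intro: finite_subset)
qed

lemma fin_fam_values: "c \<in> fin_fam F S \<Longrightarrow> c b \<in> F"
  by (simp add: fin_fam_def)

lemma fin_fam_mono: "S \<subseteq> S' \<Longrightarrow> fin_fam F S \<subseteq> fin_fam F S'"
  unfolding fin_fam_def by blast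

lemma fam_restrict_in: "c \<in> fin_fam F S' \<Longrightarrow> fam_restrict c S \<in> fin_fam F S"
  unfolding fin_fam_def fam_restrict_def by (auto elim: finite_subset[rotated])

lemma fin_fam_pointwise:
  assumes "c \<in> fin_fam F S'" "d \<in> fin_fam F S'"
    and "\<And>b. b \<in> S \<Longrightarrow> G b (c b) (d b) \<in> F" "\<And>b. b \<in> S \<Longrightarrow> G b 0 0 = 0"
  shows "(\<lambda>b. if b \<in> S then G b (c b) (d b) else 0) \<in> fin_fam F S"
proof -
  have "{b. (if b \<in> S then G b (c b) (d b) else 0) \<noteq> 0} \<subseteq> {b. c b \<noteq> 0} \<union> {b. d b \<noteq> 0}"
    using assms(4) by auto
  then have "finite {b. (if b \<in> S then G b (c b) (d b) else 0) \<noteq> 0}"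
    by (rule finite_subset) (use assms(1,2) in \<open>simp add: fin_fam_def\<close>)
  then show ?thesis
    using assms(1-3) unfolding fin_fam_def by auto
qed

end

section \<open>Inner products over F-like lines\<close>

lemma nonneg_ray_sum: "(\<And>i. i \<in> K \<Longrightarrow> f i \<in> nonneg_ray) \<Longrightarrow> sum f K \<in> nonneg_ray"
  unfolding nonneg_ray_def by (auto intro: sum_nonneg)

lemma nonneg_ray_sum_eq_0_iff:
  assumes "finite K" "\<And>i. i \<in> K \<Longrightarrow> f i \<in> nonneg_ray"
  shows "sum f K = 0 \<longleftrightarrow> (\<forall>i\<in>K. f i = 0)"
proof -
  have "f i = 0 \<longleftrightarrow> Re (f i) = 0" if "i \<in> K" for i
    using assms(2)[OF that] by (auto simp: nonneg_ray_def complex_is_Real_iff complex_eq_iff)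
  moreover have "sum f K = 0 \<longleftrightarrow> (\<Sum>i\<in>K. Re (f i)) = 0"
    using nonneg_ray_sum[of K f] assms(2)
    by (auto simp: nonneg_ray_def complex_is_Real_iff complex_eq_iff)
  ultimately show ?thesis
    using sum_nonneg_eq_0_iff[OF assms(1), of "\<lambda>i. Re (f i)"] assms(2)
    by (auto simp: nonneg_ray_def)
qed

context scalar_field
begin

lemma is_inner_productI:
  assumes \<kappa>: "mult_aut F \<kappa>"
    and add_closed: "\<And>u v. u \<in> X \<Longrightarrow> v \<in> X \<Longrightarrow> addX u v \<in> X"
    and in_F: "\<And>u v. u \<in> X \<Longrightarrow> v \<in> X \<Longrightarrow> p u v \<in> F"
    and cnj: "\<And>u v. u \<in> X \<Longrightarrow> v \<in> X \<Longrightarrow> \<kappa> (p u v) = cnj (\<kappa> (p v u))"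
    and smul: "\<And>a u v. a \<in> F \<Longrightarrow> u \<in> X \<Longrightarrow> v \<in> X \<Longrightarrow> p (smulX a u) v = a * p u v"
    and add: "\<And>u v w. u \<in> X \<Longrightarrow> v \<in> X \<Longrightarrow> w \<in> X \<Longrightarrow>
      \<kappa> (p (addX u v) w) = \<kappa> (p u w) + \<kappa> (p v w)"
    and nonneg: "\<And>u. u \<in> X \<Longrightarrow> \<kappa> (p u u) \<in> nonneg_ray"
    and definite: "\<And>u. u \<in> X \<Longrightarrow> p u u = 0 \<longleftrightarrow> u = zX"
  shows "is_inner_product F \<kappa> X addX smulX zX p"
  unfolding is_inner_product_def
proof (intro conjI ballI impI)
  fix u v w assume u: "u \<in> X" and v: "v \<in> X" and w: "w \<in> X"
  show "p u v = inv_into F \<kappa> (cnj (\<kappa> (p v u)))"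
    using cnj[OF u v] mult_aut_eq_inv_iff[OF \<kappa> in_F[OF u v]] mult_aut_in[OF \<kappa> in_F[OF v u]]
    by simp
  show "p (addX u v) w = inv_into F \<kappa> (\<kappa> (p u w) + \<kappa> (p v w))"
    using add[OF u v w] mult_aut_eq_inv_iff[OF \<kappa> in_F[OF add_closed[OF u v] w]]
      mult_aut_in[OF \<kappa> in_F[OF u w]] mult_aut_in[OF \<kappa> in_F[OF v w]]
    by simp
qed (use in_F smul nonneg definite in auto)

lemma
  assumes p: "is_inner_product F \<kappa> X addX smulX zX p" and \<kappa>: "mult_aut F \<kappa>"
    and u: "u \<in> X" and v: "v \<in> X"
  shows inner_product_in: "p u v \<in> F"
    and inner_product_cnj: "\<kappa> (p u v) = cnj (\<kappa> (p v u))"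
    and inner_product_smul: "a \<in> F \<Longrightarrow> p (smulX a u) v = a * p u v"
    and inner_product_add: "w \<in> X \<Longrightarrow> \<kappa> (p (addX u w) v) = \<kappa> (p u v) + \<kappa> (p w v)"
    and inner_product_self_eq_0_iff: "p u u = 0 \<longleftrightarrow> u = zX"
    and inner_product_self_nonneg: "u \<noteq> zX \<Longrightarrow> \<kappa> (p u u) \<in> nonneg_ray"
proof -
  note axioms = p[unfolded is_inner_product_def]
  show in_F: "p u v \<in> F" and "a \<in> F \<Longrightarrow> p (smulX a u) v = a * p u v"
    and "p u u = 0 \<longleftrightarrow> u = zX" and "u \<noteq> zX \<Longrightarrow> \<kappa> (p u u) \<in> nonneg_ray"
    using axioms u v by blast+
  have "p u v = inv_into F \<kappa> (cnj (\<kappa> (p v u)))" and "p v u \<in> F"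
    using axioms u v by blast+
  then show "\<kappa> (p u v) = cnj (\<kappa> (p v u))"
    using mult_aut_inv_right[OF \<kappa>] mult_aut_in[OF \<kappa>] by simp
  assume w: "w \<in> X"
  have "p (addX u w) v = inv_into F \<kappa> (\<kappa> (p u v) + \<kappa> (p w v))" and "p w v \<in> F"
    using axioms u v w by blast+
  then show "\<kappa> (p (addX u w) v) = \<kappa> (p u v) + \<kappa> (p w v)"
    using in_F mult_aut_inv_right[OF \<kappa>] mult_aut_in[OF \<kappa>] by simp
qed

lemma inner_product_fin_fam_zero:
  assumes p: "is_inner_product F \<kappa> (fin_fam F S) fam_add fam_smul (\<lambda>_. 0) p"
    and \<kappa>: "mult_aut F \<kappa>" and x: "x \<in> fin_fam F S"
  shows "p (\<lambda>_. 0) x = 0" and "p x (\<lambda>_. 0) = 0"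
proof -
  have "p (fam_smul 0 (\<lambda>_. 0)) x = 0 * p (\<lambda>_. 0) x"
    using p x zero_in_fin_fam[of S] scalars_closed(1) unfolding is_inner_product_def by blast
  then show zero_left: "p (\<lambda>_. 0) x = 0"
    by (simp add: fam_smul_def)
  have "p x (\<lambda>_. 0) = inv_into F \<kappa> (cnj (\<kappa> (p (\<lambda>_. 0) x)))"
    using p x zero_in_fin_fam[of S] scalars_closed(1) unfolding is_inner_product_def by blast
  then show "p x (\<lambda>_. 0) = 0"
    using mult_aut_zero[OF \<kappa>] mult_aut_eq_inv_iff[OF \<kappa>, of 0 0] by (simp add: zero_left)
qed

end

lemma lambda_sum_eq_sum:
  assumes "finite K" "K \<subseteq> I" "\<And>i. i \<in> I - K \<Longrightarrow> t i = 0" "lam 0 = 0"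
  shows "lambda_sum F lam I t = inv_into F lam (\<Sum>i\<in>K. lam (t i))"
  unfolding lambda_sum_def
  by (rule arg_cong[where f = "inv_into F lam"], rule sum.mono_neutral_left) (use assms in auto)

text \<open>An abstract form of the theorem, in which T u i stands for \<sigma>_i(u_i).\<close>

locale lambda_sum_of_inner_products = scalar_field F for F +
  fixes \<phi> lam :: "complex \<Rightarrow> complex"
    and I :: "'i set" and B :: "'i \<Rightarrow> 'b set"
    and ip :: "'i \<Rightarrow> ('b \<Rightarrow> complex) \<Rightarrow> ('b \<Rightarrow> complex) \<Rightarrow> complex"
    and X :: "'x set" and addX :: "'x \<Rightarrow> 'x \<Rightarrow> 'x" and smulX :: "complex \<Rightarrow> 'x \<Rightarrow> 'x" and zX :: 'x
    and T :: "'x \<Rightarrow> 'i \<Rightarrow> 'b \<Rightarrow> complex"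
  assumes mult_aut_\<phi>: "mult_aut F \<phi>" and mult_aut_lam: "mult_aut F lam"
    and inner_products: "i \<in> I \<Longrightarrow>
      is_inner_product F (lam \<circ> inv_into F \<phi>) (fin_fam F (B i)) fam_add fam_smul (\<lambda>_. 0) (ip i)"
    and T_in_fin_fam: "u \<in> X \<Longrightarrow> i \<in> I \<Longrightarrow> T u i \<in> fin_fam F (B i)"
    and finite_support: "u \<in> X \<Longrightarrow> finite {i\<in>I. T u i \<noteq> (\<lambda>_. 0)}"
    and add_closed: "u \<in> X \<Longrightarrow> v \<in> X \<Longrightarrow> addX u v \<in> X"
    and T_add: "u \<in> X \<Longrightarrow> v \<in> X \<Longrightarrow> i \<in> I \<Longrightarrow> T (addX u v) i = fam_add (T u i) (T v i)"
    and smul_closed: "a \<in> F \<Longrightarrow> u \<in> X \<Longrightarrow> smulX a u \<in> X"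
    and T_smul: "a \<in> F \<Longrightarrow> u \<in> X \<Longrightarrow> i \<in> I \<Longrightarrow> T (smulX a u) i = fam_smul (\<phi> a) (T u i)"
    and T_eq_0_iff: "u \<in> X \<Longrightarrow> (\<forall>i\<in>I. T u i = (\<lambda>_. 0)) \<longleftrightarrow> u = zX"
begin

abbreviation \<kappa> where "\<kappa> \<equiv> lam \<circ> inv_into F \<phi>"

definition support where "support u = {i\<in>I. T u i \<noteq> (\<lambda>_. 0)}"

definition sum_ip where
  "sum_ip u v = lambda_sum F lam I (\<lambda>i. inv_into F \<phi> (ip i (T u i) (T v i)))"

lemma mult_aut_\<kappa>: "mult_aut F \<kappa>"
  by (intro mult_aut_comp mult_aut_inv_into mult_aut_lam mult_aut_\<phi>)

lemma
  assumes "i \<in> I" "x \<in> fin_fam F (B i)"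
  shows ip_in: "y \<in> fin_fam F (B i) \<Longrightarrow> ip i x y \<in> F"
    and ip_zero_right: "ip i x (\<lambda>_. 0) = 0"
  using inner_product_in[OF inner_products[OF assms(1)] mult_aut_\<kappa> assms(2)]
    inner_product_fin_fam_zero[OF inner_products[OF assms(1)] mult_aut_\<kappa> assms(2)]
  by simp_all

lemma support_finite: "u \<in> X \<Longrightarrow> finite (support u)"
  unfolding support_def using finite_support .

lemma \<kappa>_ip_sum_in:
  "u \<in> X \<Longrightarrow> v \<in> X \<Longrightarrow> K \<subseteq> I \<Longrightarrow> (\<Sum>i\<in>K. \<kappa> (ip i (T u i) (T v i))) \<in> F"
  by (intro scalars_sum mult_aut_in[OF mult_aut_\<kappa>] ip_in T_in_fin_fam) auto

lemma sum_ip_eq: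
  assumes u: "u \<in> X" and v: "v \<in> X" and K: "finite K" "K \<subseteq> I" "support v \<subseteq> K"
  shows "sum_ip u v = inv_into F lam (\<Sum>i\<in>K. \<kappa> (ip i (T u i) (T v i)))"
proof -
  have "inv_into F \<phi> (ip i (T u i) (T v i)) = 0" if "i \<in> I - K" for i
  proof -
    have "T v i = (\<lambda>_. 0)"
      using that K(3) by (auto simp: support_def)
    then show ?thesis
      using that ip_zero_right T_in_fin_fam[OF u] mult_aut_zero[OF mult_aut_inv_into[OF mult_aut_\<phi>]]
      by simp
  qed
  then show ?thesis
    unfolding sum_ip_def using lambda_sum_eq_sum[OF K(1,2)] mult_aut_zero[OF mult_aut_lam] by simp
qed

lemma sum_ip_in: "u \<in> X \<Longrightarrow> v \<in> X \<Longrightarrow> sum_ip u v \<in> F"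
  using sum_ip_eq[OF _ _ support_finite _ order_refl] \<kappa>_ip_sum_in mult_aut_inv_in[OF mult_aut_lam]
  by (simp add: support_def)

lemma lam_sum_ip:
  assumes "u \<in> X" "v \<in> X" "finite K" "K \<subseteq> I" "support v \<subseteq> K"
  shows "lam (sum_ip u v) = (\<Sum>i\<in>K. \<kappa> (ip i (T u i) (T v i)))"
  using sum_ip_eq[OF assms] \<kappa>_ip_sum_in[OF assms(1,2,4)] mult_aut_inv_right[OF mult_aut_lam] by simp

lemma \<kappa>_mult_\<phi>: "a \<in> F \<Longrightarrow> x \<in> F \<Longrightarrow> \<kappa> (\<phi> a * x) = lam a * \<kappa> x"
  using mult_aut_mult[OF mult_aut_\<kappa>] mult_aut_in[OF mult_aut_\<phi>] mult_aut_inv_left[OF mult_aut_\<phi>]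
  by simp

lemma sum_ip_cnj:
  assumes u: "u \<in> X" and v: "v \<in> X"
  shows "lam (sum_ip u v) = cnj (lam (sum_ip v u))"
proof -
  define K where "K = support u \<union> support v"
  have K: "finite K" "K \<subseteq> I"
    using support_finite[OF u] support_finite[OF v] by (auto simp: K_def support_def)
  have "lam (sum_ip u v) = (\<Sum>i\<in>K. \<kappa> (ip i (T u i) (T v i)))"
    using lam_sum_ip[OF u v K] by (simp add: K_def)
  also have "\<dots> = (\<Sum>i\<in>K. cnj (\<kappa> (ip i (T v i) (T u i))))"
    using inner_product_cnj[OF inner_products mult_aut_\<kappa> T_in_fin_fam[OF u] T_in_fin_fam[OF v]] K(2)
    by (intro sum.cong) auto
  also have "\<dots> = cnj (lam (sum_ip v u))"
    using lam_sum_ip[OF v u K] by (simp add: K_def)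
  finally show ?thesis .
qed

lemma sum_ip_smul:
  assumes a: "a \<in> F" and u: "u \<in> X" and v: "v \<in> X"
  shows "sum_ip (smulX a u) v = a * sum_ip u v"
proof -
  note K = support_finite[OF v] _ order_refl
  have "lam (sum_ip (smulX a u) v) = (\<Sum>i\<in>support v. \<kappa> (ip i (T (smulX a u) i) (T v i)))"
    using lam_sum_ip[OF smul_closed[OF a u] v K] by (simp add: support_def)
  also have "\<dots> = (\<Sum>i\<in>support v. lam a * \<kappa> (ip i (T u i) (T v i)))"
  proof (rule sum.cong[OF refl])
    fix i assume "i \<in> support v"
    then have i: "i \<in> I"
      by (simp add: support_def)
    note Tu = T_in_fin_fam[OF u i] and Tv = T_in_fin_fam[OF v i]
    show "\<kappa> (ip i (T (smulX a u) i) (T v i)) = lam a * \<kappa> (ip i (T u i) (T v i))"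
      using T_smul[OF a u i] a \<kappa>_mult_\<phi> ip_in[OF i Tu Tv]
        inner_product_smul[OF inner_products[OF i] mult_aut_\<kappa> Tu Tv mult_aut_in[OF mult_aut_\<phi> a]]
      by simp
  qed
  also have "\<dots> = lam (a * sum_ip u v)"
    using lam_sum_ip[OF u v K] mult_aut_mult[OF mult_aut_lam a sum_ip_in[OF u v]]
    by (simp add: support_def sum_distrib_left)
  finally show ?thesis
    using mult_aut_eq_iff[OF mult_aut_lam] sum_ip_in[OF smul_closed[OF a u] v] sum_ip_in[OF u v] a
    by simp
qed

lemma sum_ip_add:
  assumes u: "u \<in> X" and v: "v \<in> X" and w: "w \<in> X"
  shows "lam (sum_ip (addX u v) w) = lam (sum_ip u w) + lam (sum_ip v w)"
proof -
  note K = support_finite[OF w] _ order_refl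
  have "lam (sum_ip (addX u v) w) = (\<Sum>i\<in>support w. \<kappa> (ip i (T (addX u v) i) (T w i)))"
    using lam_sum_ip[OF add_closed[OF u v] w K] by (simp add: support_def)
  also have "\<dots> = (\<Sum>i\<in>support w. \<kappa> (ip i (T u i) (T w i)) + \<kappa> (ip i (T v i) (T w i)))"
  proof (rule sum.cong[OF refl])
    fix i assume "i \<in> support w"
    then have i: "i \<in> I"
      by (simp add: support_def)
    show "\<kappa> (ip i (T (addX u v) i) (T w i)) = \<kappa> (ip i (T u i) (T w i)) + \<kappa> (ip i (T v i) (T w i))"
      using T_add[OF u v i] inner_product_add[OF inner_products[OF i] mult_aut_\<kappa> T_in_fin_fam[OF u i]
          T_in_fin_fam[OF w i] T_in_fin_fam[OF v i]]
      by simp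
  qed
  also have "\<dots> = lam (sum_ip u w) + lam (sum_ip v w)"
    using lam_sum_ip[OF u w K] lam_sum_ip[OF v w K] by (simp add: support_def sum.distrib)
  finally show ?thesis .
qed

lemma
  assumes u: "u \<in> X" and i: "i \<in> support u"
  shows \<kappa>_ip_self_nonneg: "\<kappa> (ip i (T u i) (T u i)) \<in> nonneg_ray"
    and \<kappa>_ip_self_nonzero: "\<kappa> (ip i (T u i) (T u i)) \<noteq> 0"
proof -
  have iI: "i \<in> I" and ne: "T u i \<noteq> (\<lambda>_. 0)"
    using i by (auto simp: support_def)
  note Tu = T_in_fin_fam[OF u iI]
  show "\<kappa> (ip i (T u i) (T u i)) \<in> nonneg_ray"
    using inner_product_self_nonneg[OF inner_products[OF iI] mult_aut_\<kappa> Tu Tu ne] .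
  show "\<kappa> (ip i (T u i) (T u i)) \<noteq> 0"
    using inner_product_self_eq_0_iff[OF inner_products[OF iI] mult_aut_\<kappa> Tu Tu] ne
      mult_aut_eq_0_iff[OF mult_aut_\<kappa> ip_in[OF iI Tu Tu]]
    by simp
qed

lemma lam_sum_ip_self: "u \<in> X \<Longrightarrow> lam (sum_ip u u) = (\<Sum>i\<in>support u. \<kappa> (ip i (T u i) (T u i)))"
  using lam_sum_ip[OF _ _ support_finite] by (simp add: support_def)

lemma sum_ip_self_nonneg: "u \<in> X \<Longrightarrow> lam (sum_ip u u) \<in> nonneg_ray"
  unfolding lam_sum_ip_self by (rule nonneg_ray_sum) (rule \<kappa>_ip_self_nonneg)

lemma sum_ip_self_eq_0_iff:
  assumes u: "u \<in> X"
  shows "sum_ip u u = 0 \<longleftrightarrow> u = zX"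
proof -
  have "sum_ip u u = 0 \<longleftrightarrow> lam (sum_ip u u) = 0"
    using mult_aut_eq_0_iff[OF mult_aut_lam sum_ip_in[OF u u]] by simp
  also have "\<dots> \<longleftrightarrow> (\<forall>i\<in>support u. \<kappa> (ip i (T u i) (T u i)) = 0)"
    unfolding lam_sum_ip_self[OF u]
    by (rule nonneg_ray_sum_eq_0_iff[OF support_finite[OF u] \<kappa>_ip_self_nonneg[OF u]])
  also have "\<dots> \<longleftrightarrow> support u = {}"
    using \<kappa>_ip_self_nonzero[OF u] by blast
  also have "\<dots> \<longleftrightarrow> u = zX"
    using T_eq_0_iff[OF u] by (auto simp: support_def)
  finally show ?thesis .
qed

lemma is_inner_product_sum_ip: "is_inner_product F lam X addX smulX zX sum_ip"
  by (rule is_inner_productI[OF mult_aut_lam add_closed sum_ip_in sum_ip_cnj sum_ip_smul sum_ip_add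
        sum_ip_self_nonneg sum_ip_self_eq_0_iff])

end

section \<open>Coordinates with respect to independent sets\<close>

locale vector_space_over = scalar_field F for F +
  fixes sc :: "complex \<Rightarrow> 'v::ab_group_add \<Rightarrow> 'v"
  assumes vector_space: "f_vector_space F sc"
begin

lemma sc_add_left: "a \<in> F \<Longrightarrow> b \<in> F \<Longrightarrow> sc (a + b) x = sc a x + sc b x"
  using vector_space by (simp add: f_vector_space_def)

lemma sc_one: "sc 1 x = x"
  using vector_space by (simp add: f_vector_space_def)

lemma sc_zero_left [simp]: "sc 0 x = 0"
  using sc_add_left[of 0 0 x] by simp

lemma sc_diff_left: "a \<in> F \<Longrightarrow> b \<in> F \<Longrightarrow> sc (a - b) x = sc a x - sc b x"
  using sc_add_left[of "a - b" b x] by (simp add: eq_diff_eq)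

lemma f_subspace_diff:
  assumes "f_subspace F sc S" "x \<in> S" "y \<in> S"
  shows "x - y \<in> S"
proof -
  have "sc (-1) y = - y"
    using sc_diff_left[of 0 1 y] sc_one by simp
  then show ?thesis
    using assms unfolding f_subspace_def by (metis diff_conv_add_uminus scalars_closed(2,6))
qed

lemma coords_inv_eq_sum:
  assumes "finite T" "{b. c b \<noteq> 0} \<subseteq> T"
  shows "coords_inv sc c = (\<Sum>b\<in>T. sc (c b) b)"
  unfolding coords_inv_def by (rule sum.mono_neutral_left) (use assms in auto)

lemma coords_inv_zero [simp]: "coords_inv sc (\<lambda>_. 0) = 0"
  by (simp add: coords_inv_def)

lemma coords_inv_add:
  assumes "c \<in> fin_fam F S" "d \<in> fin_fam F S"
  shows "coords_inv sc (fam_add c d) = coords_inv sc c + coords_inv sc d"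
proof -
  let ?T = "{b. c b \<noteq> 0} \<union> {b. d b \<noteq> 0}"
  have T: "finite ?T"
    using assms by (simp add: fin_fam_def)
  have F: "c b \<in> F" "d b \<in> F" for b
    using assms by (simp_all add: fin_fam_def)
  have c: "coords_inv sc c = (\<Sum>b\<in>?T. sc (c b) b)" and d: "coords_inv sc d = (\<Sum>b\<in>?T. sc (d b) b)"
    by (rule coords_inv_eq_sum[OF T]; blast)+
  have "coords_inv sc (fam_add c d) = (\<Sum>b\<in>?T. sc (c b + d b) b)"
    unfolding fam_add_def by (rule coords_inv_eq_sum[OF T]) auto
  also have "\<dots> = (\<Sum>b\<in>?T. sc (c b) b) + (\<Sum>b\<in>?T. sc (d b) b)"
    unfolding sum.distrib[symmetric] by (rule sum.cong[OF refl]) (rule sc_add_left[OF F])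
  finally show ?thesis
    unfolding c d .
qed

lemma f_independentD:
  "f_independent F sc S \<Longrightarrow> finite T \<Longrightarrow> T \<subseteq> S \<Longrightarrow> (\<And>x. x \<in> T \<Longrightarrow> c x \<in> F) \<Longrightarrow>
    (\<Sum>x\<in>T. sc (c x) x) = 0 \<Longrightarrow> x \<in> T \<Longrightarrow> c x = 0"
  unfolding f_independent_def by blast

lemma coords_inv_inj:
  assumes indep: "f_independent F sc S" and c: "c \<in> fin_fam F S" and d: "d \<in> fin_fam F S"
    and eq: "coords_inv sc c = coords_inv sc d"
  shows "c = d"
proof
  fix b
  let ?T = "{b. c b \<noteq> 0} \<union> {b. d b \<noteq> 0}"
  have T: "finite ?T" "?T \<subseteq> S"
    using c d by (auto simp: fin_fam_def)
  have F: "c b \<in> F" "d b \<in> F" for b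
    using c d by (simp_all add: fin_fam_def)
  have sum_c: "coords_inv sc c = (\<Sum>b\<in>?T. sc (c b) b)" and sum_d: "coords_inv sc d = (\<Sum>b\<in>?T. sc (d b) b)"
    by (rule coords_inv_eq_sum[OF T(1)]; blast)+
  have "(\<Sum>b\<in>?T. sc (c b - d b) b) = (\<Sum>b\<in>?T. sc (c b) b) - (\<Sum>b\<in>?T. sc (d b) b)"
    unfolding sum_subtractf[symmetric] by (rule sum.cong[OF refl]) (rule sc_diff_left[OF F])
  also have "\<dots> = 0"
    using eq unfolding sum_c sum_d by simp
  finally have sum0: "(\<Sum>b\<in>?T. sc (c b - d b) b) = 0" .
  have "c b - d b \<in> F" for b
    using F by simp
  then have "c b - d b = 0" if "b \<in> ?T"
    using f_independentD[OF indep T _ sum0 that] by blast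
  then show "c b = d b"
    by (cases "b \<in> ?T") auto
qed

lemma coords_coords_inv:
  assumes "f_independent F sc S" "c \<in> fin_fam F S"
  shows "coords F sc S (coords_inv sc c) = c"
  unfolding coords_def
  by (rule the_equality) (use coords_inv_inj[OF assms(1)] assms(2) in auto)

lemma f_span_eq_image: "f_span F sc S = coords_inv sc ` fin_fam F S"
proof
  show "f_span F sc S \<subseteq> coords_inv sc ` fin_fam F S"
  proof
    fix u assume "u \<in> f_span F sc S"
    then obtain T c where T: "finite T" "T \<subseteq> S" "\<forall>x\<in>T. c x \<in> F" and u: "u = (\<Sum>x\<in>T. sc (c x) x)"
      unfolding f_span_def by blast
    have c: "fam_restrict c T \<in> fin_fam F S"
      using T by (auto simp: fin_fam_def fam_restrict_def elim: finite_subset[rotated])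
    have "coords_inv sc (fam_restrict c T) = (\<Sum>b\<in>T. sc (fam_restrict c T b) b)"
      by (rule coords_inv_eq_sum[OF T(1)]) (auto simp: fam_restrict_def)
    also have "\<dots> = u"
      using u by (simp add: fam_restrict_def)
    finally show "u \<in> coords_inv sc ` fin_fam F S"
      using c by blast
  qed
  show "coords_inv sc ` fin_fam F S \<subseteq> f_span F sc S"
    unfolding coords_inv_def f_span_def fin_fam_def by blast
qed

end

section \<open>Direct sums with bases\<close>

locale direct_sum_with_bases = vector_space_over F sc for F sc +
  fixes I :: "'i set" and W B :: "'i \<Rightarrow> 'v::ab_group_add set"
  assumes subspace: "i \<in> I \<Longrightarrow> f_subspace F sc (W i)"
    and direct: "independent_family I W"
    and basis: "i \<in> I \<Longrightarrow> f_basis F sc (W i) (B i)"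
begin

abbreviation BB where "BB \<equiv> \<Union>i\<in>I. B i"

definition block where "block b = (SOME i. i \<in> I \<and> b \<in> B i)"

lemma basis_independent: "i \<in> I \<Longrightarrow> f_independent F sc (B i)"
  using basis by (simp add: f_basis_def)

lemma basis_subset: "i \<in> I \<Longrightarrow> B i \<subseteq> W i"
  using basis by (simp add: f_basis_def)

lemma subspace_eq_image: "i \<in> I \<Longrightarrow> W i = coords_inv sc ` fin_fam F (B i)"
  using basis f_span_eq_image by (simp add: f_basis_def)

lemma directD:
  "finite J \<Longrightarrow> J \<subseteq> I \<Longrightarrow> (\<And>i. i \<in> J \<Longrightarrow> w i \<in> W i) \<Longrightarrow> sum w J = 0 \<Longrightarrow> i \<in> J \<Longrightarrow> w i = 0"
  using direct unfolding independent_family_def by blast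

lemma zero_notin_basis: "i \<in> I \<Longrightarrow> 0 \<notin> B i"
  using f_independentD[OF basis_independent, of i "{0}" "\<lambda>_. 1" 0] sc_one by auto

lemma bases_disjoint:
  assumes "i \<in> I" "j \<in> I" "b \<in> B i" "b \<in> B j"
  shows "i = j"
proof (rule ccontr)
  assume ne: "i \<noteq> j"
  define w where "w k = (if k = i then b else - b)" for k
  have "w k \<in> W k" if "k \<in> {i, j}" for k
    using that assms basis_subset f_subspace_diff[OF subspace[of j], of 0 b] subspace[of j] ne
    by (auto simp: w_def f_subspace_def)
  moreover have "sum w {i, j} = 0"
    using ne by (simp add: w_def)
  ultimately have "w i = 0"
    using directD[of "{i, j}" w i] assms by simp
  then show False
    using zero_notin_basis assms by (simp add: w_def)
qed

lemma block: "b \<in> BB \<Longrightarrow> block b \<in> I \<and> b \<in> B (block b)"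
  unfolding block_def by (rule someI_ex) blast

lemma block_eq: "i \<in> I \<Longrightarrow> b \<in> B i \<Longrightarrow> block b = i"
  using block bases_disjoint by blast

lemma independent_BB: "f_independent F sc BB"
  unfolding f_independent_def
proof (intro allI impI ballI)
  fix T c x
  assume T: "finite T" "T \<subseteq> BB" "\<forall>x\<in>T. c x \<in> F" and sum0: "(\<Sum>x\<in>T. sc (c x) x) = 0"
    and x: "x \<in> T"
  define w where "w i = (\<Sum>x\<in>{x\<in>T. block x = i}. sc (c x) x)" for i
  have J: "finite (block ` T)" "block ` T \<subseteq> I"
    using T block by auto
  have part: "{y\<in>T. block y = i} \<subseteq> B i" for i
    using T(2) block by blast
  have "sum w (block ` T) = 0"
    unfolding w_def using sum.group[OF T(1) J(1) subset_refl, of "\<lambda>x. sc (c x) x"] sum0 by simp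
  moreover have "w i \<in> W i" if "i \<in> block ` T" for i
  proof -
    have "finite {y\<in>T. block y = i}"
      using T(1) by simp
    then have "w i \<in> f_span F sc (B i)"
      unfolding w_def f_span_def using T(3) part[of i] by blast
    then show ?thesis
      using basis[OF subsetD[OF J(2) that]] by (simp add: f_basis_def)
  qed
  ultimately have "w (block x) = 0"
    using directD[OF J] x by blast
  then show "c x = 0"
    using f_independentD[OF basis_independent _ part, of "block x" c x] block[OF subsetD[OF T(2) x]] T x
    unfolding w_def by auto
qed

lemma block_image_support:
  assumes "c \<in> fin_fam F BB"
  shows "finite (block ` {b. c b \<noteq> 0})" "block ` {b. c b \<noteq> 0} \<subseteq> I"
proof -
  have "finite {b. c b \<noteq> 0}" "{b. c b \<noteq> 0} \<subseteq> BB"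
    using assms unfolding fin_fam_def by blast+
  then show "finite (block ` {b. c b \<noteq> 0})" "block ` {b. c b \<noteq> 0} \<subseteq> I"
    using block by auto
qed

lemma fam_restrict_eq_zero:
  assumes "i \<in> I" "i \<notin> block ` {b. c b \<noteq> 0}"
  shows "fam_restrict c (B i) = (\<lambda>_. 0)"
  using assms block_eq by (force simp: fam_restrict_def)

lemma coords_inv_decompose:
  assumes c: "c \<in> fin_fam F BB"
  shows "coords_inv sc c = (\<Sum>i\<in>block ` {b. c b \<noteq> 0}. coords_inv sc (fam_restrict c (B i)))"
proof -
  let ?S = "{b. c b \<noteq> 0}"
  have S: "finite ?S" "?S \<subseteq> BB"
    using c by (auto simp: fin_fam_def)
  have "coords_inv sc c = (\<Sum>i\<in>block ` ?S. \<Sum>b\<in>{b\<in>?S. block b = i}. sc (c b) b)"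
    unfolding coords_inv_def by (rule sum.group[OF S(1) finite_imageI[OF S(1)] subset_refl, symmetric])
  also have "\<dots> = (\<Sum>i\<in>block ` ?S. coords_inv sc (fam_restrict c (B i)))"
  proof (rule sum.cong[OF refl])
    fix i assume "i \<in> block ` ?S"
    then have i: "i \<in> I"
      using block_image_support[OF c] by blast
    have "{b. fam_restrict c (B i) b \<noteq> 0} \<subseteq> {b\<in>?S. block b = i}"
      using block_eq[OF i] by (auto simp: fam_restrict_def split: if_splits)
    then have "coords_inv sc (fam_restrict c (B i)) = (\<Sum>b\<in>{b\<in>?S. block b = i}. sc (fam_restrict c (B i) b) b)"
      using S(1) by (intro coords_inv_eq_sum) auto
    also have "\<dots> = (\<Sum>b\<in>{b\<in>?S. block b = i}. sc (c b) b)"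
    proof (rule sum.cong[OF refl])
      fix b assume "b \<in> {b\<in>?S. block b = i}"
      then have "b \<in> B i"
        using block[of b] S(2) by auto
      then show "sc (fam_restrict c (B i) b) b = sc (c b) b"
        by (simp add: fam_restrict_def)
    qed
    finally show "(\<Sum>b\<in>{b\<in>?S. block b = i}. sc (c b) b) = coords_inv sc (fam_restrict c (B i))"
      by simp
  qed
  finally show ?thesis .
qed

lemma sum_of_family_eq_image: "sum_of_family I W = coords_inv sc ` fin_fam F BB"
proof
  have "sum w J \<in> coords_inv sc ` fin_fam F BB"
    if "finite J" "J \<subseteq> I" "\<forall>i\<in>J. w i \<in> W i" for J w
    using that
  proof (induction J rule: finite_induct)
    case empty
    show ?case
      using image_eqI[where f = "coords_inv sc", OF coords_inv_zero[symmetric] zero_in_fin_fam[of BB]]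
      by simp
  next
    case (insert i J)
    obtain c where c: "c \<in> fin_fam F BB" "sum w J = coords_inv sc c"
      using insert by auto
    obtain d where "d \<in> fin_fam F (B i)" and d: "w i = coords_inv sc d"
      using insert subspace_eq_image[of i] by auto
    then have d_in: "d \<in> fin_fam F BB"
      using fin_fam_mono[of "B i" BB] insert by auto
    have "sum w (insert i J) = coords_inv sc (fam_add d c)"
      using insert c d coords_inv_add[OF d_in c(1)] by simp
    then show ?case
      using fin_fam_add[OF d_in c(1)] by blast
  qed
  then show "sum_of_family I W \<subseteq> coords_inv sc ` fin_fam F BB"
    unfolding sum_of_family_def by blast
  show "coords_inv sc ` fin_fam F BB \<subseteq> sum_of_family I W"
  proof
    fix u assume "u \<in> coords_inv sc ` fin_fam F BB"
    then obtain c where c: "c \<in> fin_fam F BB" and u: "u = coords_inv sc c"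
      by blast
    have "coords_inv sc (fam_restrict c (B i)) \<in> W i" if "i \<in> I" for i
      using subspace_eq_image[OF that] fam_restrict_in[OF c] by blast
    then show "u \<in> sum_of_family I W"
      unfolding sum_of_family_def u coords_inv_decompose[OF c]
      using block_image_support[OF c] by blast
  qed
qed

lemma sum_of_familyE:
  assumes "u \<in> sum_of_family I W"
  obtains c where "c \<in> fin_fam F BB" "u = coords_inv sc c"
  using assms sum_of_family_eq_image by blast

lemma direct_sum_unique:
  assumes J: "finite J" "J \<subseteq> I" and w: "\<And>i. i \<in> I \<Longrightarrow> w i \<in> W i" "\<And>i. i \<in> I \<Longrightarrow> w' i \<in> W i"
    and eq: "sum w J = sum w' J" and i: "i \<in> J"
  shows "w i = w' i"
proof -
  have "(\<Sum>i\<in>J. w i - w' i) = 0"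
    using eq by (simp add: sum_subtractf)
  moreover have "w i - w' i \<in> W i" if "i \<in> J" for i
    using f_subspace_diff[OF subspace w] that J(2) by blast
  ultimately show ?thesis
    using directD[OF J, of "\<lambda>i. w i - w' i" i] i by simp
qed

lemma component_eqI:
  assumes K: "finite K" "K \<subseteq> I" and w: "\<And>i. i \<in> K \<Longrightarrow> w i \<in> W i" "\<And>i. i \<notin> K \<Longrightarrow> w i = 0"
    and u: "u = sum w K"
  shows "component I W u = w"
  unfolding component_def
proof (rule the_equality)
  have wW: "w i \<in> W i" if "i \<in> I" for i
    using w subspace[OF that] by (cases "i \<in> K") (auto simp: f_subspace_def)
  have supp: "{i\<in>I. w i \<noteq> 0} \<subseteq> K"
    using w(2) by blast
  have "(\<Sum>i\<in>{i\<in>I. w i \<noteq> 0}. w i) = sum w K"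
    by (rule sum.mono_neutral_left[OF K(1) supp]) (use K(2) in auto)
  then show "(\<forall>i\<in>I. w i \<in> W i) \<and> (\<forall>i. i \<notin> I \<longrightarrow> w i = 0) \<and> finite {i\<in>I. w i \<noteq> 0} \<and>
      u = (\<Sum>i\<in>{i\<in>I. w i \<noteq> 0}. w i)"
    using wW w(2) K(2) finite_subset[OF supp K(1)] u by auto
  fix w' assume "(\<forall>i\<in>I. w' i \<in> W i) \<and> (\<forall>i. i \<notin> I \<longrightarrow> w' i = 0) \<and>
      finite {i\<in>I. w' i \<noteq> 0} \<and> u = (\<Sum>i\<in>{i\<in>I. w' i \<noteq> 0}. w' i)"
  then have w'W: "\<And>i. i \<in> I \<Longrightarrow> w' i \<in> W i" and w'0: "\<And>i. i \<notin> I \<Longrightarrow> w' i = 0"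
    and fin': "finite {i\<in>I. w' i \<noteq> 0}" and u': "u = (\<Sum>i\<in>{i\<in>I. w' i \<noteq> 0}. w' i)"
    by blast+
  define J where "J = K \<union> {i\<in>I. w' i \<noteq> 0}"
  have J: "finite J" "J \<subseteq> I"
    using K fin' by (auto simp: J_def)
  have "sum w' J = u"
    unfolding u' by (rule sum.mono_neutral_right[OF J(1)]) (use K(2) in \<open>auto simp: J_def\<close>)
  moreover have "sum w J = u"
    unfolding u by (rule sum.mono_neutral_right[OF J(1)]) (use w(2) in \<open>auto simp: J_def\<close>)
  ultimately have "w' i = w i" if "i \<in> J" for i
    using direct_sum_unique[OF J w'W wW _ that] by simp
  moreover have "w' i = w i" if "i \<notin> J" for i
    using that w(2) w'0 by (auto simp: J_def)
  ultimately show "w' = w"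
    by (metis ext)
qed

lemma component_coords_inv:
  assumes c: "c \<in> fin_fam F BB" and i: "i \<in> I"
  shows "component I W (coords_inv sc c) i = coords_inv sc (fam_restrict c (B i))"
proof -
  let ?K = "block ` {b. c b \<noteq> 0}"
  define w where "w j = (if j \<in> ?K then coords_inv sc (fam_restrict c (B j)) else 0)" for j
  have "component I W (coords_inv sc c) = w"
  proof (rule component_eqI[OF block_image_support[OF c]])
    show "w j \<in> W j" if "j \<in> ?K" for j
      using that block_image_support[OF c] subspace_eq_image fam_restrict_in[OF c]
      by (auto simp: w_def)
    show "coords_inv sc c = sum w ?K"
      unfolding coords_inv_decompose[OF c] w_def by simp
  qed (simp add: w_def)
  then show ?thesis
    using fam_restrict_eq_zero[OF i, of c] by (simp add: w_def)
qed

end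

section \<open>Twisted coordinates\<close>

locale twisted_coordinates = direct_sum_with_bases F sc I W B
  for F and sc :: "complex \<Rightarrow> 'v::ab_group_add \<Rightarrow> 'v" and I :: "'i set" and W B +
  fixes \<phi> :: "complex \<Rightarrow> complex" and \<rho> :: "'v \<Rightarrow> complex \<Rightarrow> complex"
  assumes mult_aut_\<phi>: "mult_aut F \<phi>" and mult_aut_\<rho>: "b \<in> BB \<Longrightarrow> mult_aut F (\<rho> b)"
begin

definition twist where "twist b = \<phi> \<circ> inv_into F (\<rho> b)"

definition \<sigma> where "\<sigma> u i = sigma_tilde F sc (B i) \<phi> \<rho> (component I W u i)"

lemma mult_aut_twist: "b \<in> BB \<Longrightarrow> mult_aut F (twist b)"
  unfolding twist_def by (intro mult_aut_comp mult_aut_\<phi> mult_aut_inv_into mult_aut_\<rho>)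

lemma inv_twist:
  assumes "b \<in> BB" "y \<in> F"
  shows "inv_into F (twist b) y = \<rho> b (inv_into F \<phi> y)"
proof -
  have "twist b (\<rho> b (inv_into F \<phi> y)) = y"
    unfolding twist_def using assms mult_aut_\<rho> mult_aut_\<phi>
    by (simp add: mult_aut_inv_left mult_aut_inv_right mult_aut_inv_in)
  then show ?thesis
    using mult_aut_inv_left[OF mult_aut_twist[OF assms(1)]] assms mult_aut_\<rho> mult_aut_\<phi>
    by (metis mult_aut_in mult_aut_inv_in)
qed

lemma \<sigma>_coords_inv:
  assumes c: "c \<in> fin_fam F BB" and i: "i \<in> I"
  shows "\<sigma> (coords_inv sc c) i = (\<lambda>b. if b \<in> B i then twist b (c b) else 0)"
proof -
  have coords: "coords F sc (B i) (component I W (coords_inv sc c) i) = fam_restrict c (B i)"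
    unfolding component_coords_inv[OF c i]
    using coords_coords_inv[OF basis_independent[OF i] fam_restrict_in[OF c]] .
  show ?thesis
    unfolding \<sigma>_def sigma_tilde_def twist_def coords by (auto simp: fam_restrict_def)
qed

lemma eta_add_coords_inv:
  assumes c: "c \<in> fin_fam F BB" and d: "d \<in> fin_fam F BB"
  shows "eta_add F sc BB \<phi> \<rho> (coords_inv sc c) (coords_inv sc d) =
    coords_inv sc (\<lambda>b. if b \<in> BB then inv_into F (twist b) (twist b (c b) + twist b (d b)) else 0)"
proof -
  have "c b \<in> F" "d b \<in> F" for b
    using c d by (simp_all add: fin_fam_def)
  then show ?thesis
    unfolding eta_add_def coords_coords_inv[OF independent_BB c] coords_coords_inv[OF independent_BB d]
    using inv_twist mult_aut_in[OF mult_aut_twist] by (simp add: twist_def cong: if_cong)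
qed

lemma eta_smul_coords_inv:
  assumes "c \<in> fin_fam F BB"
  shows "eta_smul F sc BB \<rho> a (coords_inv sc c) = coords_inv sc (\<lambda>b. if b \<in> BB then \<rho> b a * c b else 0)"
  unfolding eta_smul_def coords_coords_inv[OF independent_BB assms] ..

lemma twist_in: "b \<in> BB \<Longrightarrow> x \<in> F \<Longrightarrow> twist b x \<in> F"
  using mult_aut_in[OF mult_aut_twist] .

lemma twist_zero: "b \<in> BB \<Longrightarrow> twist b 0 = 0"
  using mult_aut_zero[OF mult_aut_twist] .

lemma twist_\<rho>_mult: "b \<in> BB \<Longrightarrow> a \<in> F \<Longrightarrow> x \<in> F \<Longrightarrow> twist b (\<rho> b a * x) = \<phi> a * twist b x"
  using mult_aut_mult[OF mult_aut_twist] mult_aut_in[OF mult_aut_\<rho>] mult_aut_inv_left[OF mult_aut_\<rho>]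
  by (simp add: twist_def)

lemma \<sigma>_in_fin_fam:
  assumes "u \<in> sum_of_family I W" "i \<in> I"
  shows "\<sigma> u i \<in> fin_fam F (B i)"
proof -
  obtain c where c: "c \<in> fin_fam F BB" and u: "u = coords_inv sc c"
    using assms(1) by (rule sum_of_familyE)
  show ?thesis
    unfolding u \<sigma>_coords_inv[OF c assms(2)]
    by (rule fin_fam_pointwise[OF c c]) (use assms(2) twist_in twist_zero fin_fam_values[OF c] in auto)
qed

lemma \<sigma>_coords_inv_eq_0_iff:
  assumes c: "c \<in> fin_fam F BB" and i: "i \<in> I"
  shows "\<sigma> (coords_inv sc c) i = (\<lambda>_. 0) \<longleftrightarrow> (\<forall>b\<in>B i. c b = 0)"
proof -
  have "twist b (c b) = 0 \<longleftrightarrow> c b = 0" if "b \<in> B i" for b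
    using mult_aut_eq_0_iff[OF mult_aut_twist fin_fam_values[OF c]] i that by blast
  then show ?thesis
    unfolding \<sigma>_coords_inv[OF c i] fun_eq_iff by auto
qed

lemma \<sigma>_finite_support:
  assumes "u \<in> sum_of_family I W"
  shows "finite {i\<in>I. \<sigma> u i \<noteq> (\<lambda>_. 0)}"
proof -
  obtain c where c: "c \<in> fin_fam F BB" and u: "u = coords_inv sc c"
    using assms by (rule sum_of_familyE)
  have "{i\<in>I. \<sigma> u i \<noteq> (\<lambda>_. 0)} \<subseteq> block ` {b. c b \<noteq> 0}"
    unfolding u using \<sigma>_coords_inv_eq_0_iff[OF c] block_eq by blast
  then show ?thesis
    using block_image_support(1)[OF c] by (rule finite_subset)
qed

lemma
  assumes "u \<in> sum_of_family I W" "v \<in> sum_of_family I W"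
  shows eta_add_closed: "eta_add F sc BB \<phi> \<rho> u v \<in> sum_of_family I W"
    and \<sigma>_eta_add: "i \<in> I \<Longrightarrow> \<sigma> (eta_add F sc BB \<phi> \<rho> u v) i = fam_add (\<sigma> u i) (\<sigma> v i)"
proof -
  obtain c where c: "c \<in> fin_fam F BB" and u: "u = coords_inv sc c"
    using assms(1) by (rule sum_of_familyE)
  obtain d where d: "d \<in> fin_fam F BB" and v: "v = coords_inv sc d"
    using assms(2) by (rule sum_of_familyE)
  define e where "e b = (if b \<in> BB then inv_into F (twist b) (twist b (c b) + twist b (d b)) else 0)" for b
  have e: "e \<in> fin_fam F BB"
    unfolding e_def
    by (rule fin_fam_pointwise[OF c d])
      (use twist_in twist_zero fin_fam_values[OF c] fin_fam_values[OF d]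
        mult_aut_inv_in[OF mult_aut_twist] mult_aut_zero[OF mult_aut_inv_into[OF mult_aut_twist]] in auto)
  have eta: "eta_add F sc BB \<phi> \<rho> u v = coords_inv sc e"
    unfolding u v eta_add_coords_inv[OF c d] e_def ..
  show "eta_add F sc BB \<phi> \<rho> u v \<in> sum_of_family I W"
    unfolding eta sum_of_family_eq_image using e by blast
  assume i: "i \<in> I"
  show "\<sigma> (eta_add F sc BB \<phi> \<rho> u v) i = fam_add (\<sigma> u i) (\<sigma> v i)"
    unfolding eta \<sigma>_coords_inv[OF e i] unfolding u v \<sigma>_coords_inv[OF c i] \<sigma>_coords_inv[OF d i]
    using i twist_in fin_fam_values[OF c] fin_fam_values[OF d] mult_aut_inv_right[OF mult_aut_twist]
    by (auto simp: fun_eq_iff fam_add_def e_def)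
qed

lemma
  assumes "u \<in> sum_of_family I W" "a \<in> F"
  shows eta_smul_closed: "eta_smul F sc BB \<rho> a u \<in> sum_of_family I W"
    and \<sigma>_eta_smul: "i \<in> I \<Longrightarrow> \<sigma> (eta_smul F sc BB \<rho> a u) i = fam_smul (\<phi> a) (\<sigma> u i)"
proof -
  obtain c where c: "c \<in> fin_fam F BB" and u: "u = coords_inv sc c"
    using assms(1) by (rule sum_of_familyE)
  define e where "e b = (if b \<in> BB then \<rho> b a * c b else 0)" for b
  have e: "e \<in> fin_fam F BB"
    unfolding e_def
    by (rule fin_fam_pointwise[OF c c]) (use assms(2) mult_aut_in[OF mult_aut_\<rho>] fin_fam_values[OF c] in auto)
  have eta: "eta_smul F sc BB \<rho> a u = coords_inv sc e"
    unfolding u eta_smul_coords_inv[OF c] e_def ..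
  show "eta_smul F sc BB \<rho> a u \<in> sum_of_family I W"
    unfolding eta sum_of_family_eq_image using e by blast
  assume i: "i \<in> I"
  show "\<sigma> (eta_smul F sc BB \<rho> a u) i = fam_smul (\<phi> a) (\<sigma> u i)"
    unfolding eta \<sigma>_coords_inv[OF e i] unfolding u \<sigma>_coords_inv[OF c i]
    using i assms(2) twist_\<rho>_mult fin_fam_values[OF c]
    by (auto simp: fun_eq_iff fam_smul_def e_def)
qed

lemma \<sigma>_eq_0_iff:
  assumes "u \<in> sum_of_family I W"
  shows "(\<forall>i\<in>I. \<sigma> u i = (\<lambda>_. 0)) \<longleftrightarrow> u = 0"
proof -
  obtain c where c: "c \<in> fin_fam F BB" and u: "u = coords_inv sc c"
    using assms by (rule sum_of_familyE)
  have "(\<forall>i\<in>I. \<sigma> u i = (\<lambda>_. 0)) \<longleftrightarrow> (\<forall>b\<in>BB. c b = 0)"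
    unfolding u using \<sigma>_coords_inv_eq_0_iff[OF c] by blast
  also have "\<dots> \<longleftrightarrow> c = (\<lambda>_. 0)"
    using c unfolding fin_fam_def fun_eq_iff by blast
  also have "\<dots> \<longleftrightarrow> u = 0"
    using coords_inv_inj[OF independent_BB c zero_in_fin_fam] unfolding u by auto
  finally show ?thesis .
qed

end

theorem mainTheorem4:
  fixes F :: "complex set"
    and sc :: "complex \<Rightarrow> 'v::ab_group_add \<Rightarrow> 'v"
    and I :: "'i set"
    and W B :: "'i \<Rightarrow> 'v set"
    and \<phi> lam :: "complex \<Rightarrow> complex"
    and \<rho> :: "'v \<Rightarrow> complex \<Rightarrow> complex"
    and ip :: "'i \<Rightarrow> ('v \<Rightarrow> complex) \<Rightarrow> ('v \<Rightarrow> complex) \<Rightarrow> complex"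
  assumes F: "F = \<real> \<or> F = UNIV"
    and V: "f_vector_space F sc"
    and Wsub: "\<forall>i\<in>I. f_subspace F sc (W i)"
    and direct: "independent_family I W"
    and basis: "\<forall>i\<in>I. f_basis F sc (W i) (B i)"
    and phi: "mult_aut F \<phi>" "commutes_cnj F \<phi>" "order_pres_nonneg \<phi>"
    and lam: "mult_aut F lam" "commutes_cnj F lam" "order_pres_nonneg lam"
    and rho: "\<forall>b\<in>(\<Union>i\<in>I. B i). mult_aut F (\<rho> b)"
    and ips: "\<forall>i\<in>I. is_inner_product F (lam \<circ> inv_into F \<phi>) (fin_fam F (B i))
                       fam_add fam_smul (\<lambda>_. 0) (ip i)"
  shows "is_inner_product F lam (sum_of_family I W)
           (eta_add F sc (\<Union>i\<in>I. B i) \<phi> \<rho>) (eta_smul F sc (\<Union>i\<in>I. B i) \<rho>) 0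
           (ip_I F sc I W B \<phi> lam \<rho> ip)"
proof -
  interpret C: twisted_coordinates F sc I W B \<phi> \<rho>
    by unfold_locales (use F V Wsub direct basis phi(1) rho in auto)
  interpret S: lambda_sum_of_inner_products F \<phi> lam I B ip "sum_of_family I W"
      "eta_add F sc (\<Union>i\<in>I. B i) \<phi> \<rho>" "eta_smul F sc (\<Union>i\<in>I. B i) \<rho>" 0 C.\<sigma>
    by unfold_locales
      (use F phi(1) lam(1) ips C.\<sigma>_in_fin_fam C.\<sigma>_finite_support C.eta_add_closed C.\<sigma>_eta_add
        C.eta_smul_closed C.\<sigma>_eta_smul C.\<sigma>_eq_0_iff in auto)
  have "ip_I F sc I W B \<phi> lam \<rho> ip = S.sum_ip"
    by (simp add: fun_eq_iff ip_I_def S.sum_ip_def C.\<sigma>_def)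
  then show ?thesis
    using S.is_inner_product_sum_ip by simp
qed

end
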